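(* Suppose Assumption 1 holds. Then for any $\ell=1,\dots,\mathsf{L}$ the joint kernel $\bm p_\ell$ satisfies a drift condition: there exist a measurable function $V:\mathsf{X}^2\to[1,\infty)$, a small set $S\in\mathcal{B}(\mathsf{X}^2)$ for $\bm p_\ell$, and constants $\lambda\in(0,1)$, $\kappa<\infty$ such that $$(\bm P_\ell V)(\bm\theta_\ell)\le\lambda V(\bm\theta_\ell)+\kappa\mathbf 1_{\{\bm\theta_\ell\in S\}}\qquad\forall\bm\theta_\ell\in\mathsf{X}^2.$$
   Context: Setting: $\mathsf{X}$ separable Banach space, prior $\mu_{\mathrm{pr}}$; posteriors $\mu^y_j$ with $\mu_{\mathrm{pr}}$-densities $\pi^y_j$; proposal density $Q_\ell$ w.r.t. $\mu_{\mathrm{pr}}$; $\alpha_j(\theta,z)=\min\{1,\frac{\pi^y_j(z)Q_\ell(\theta)}{\pi^y_j(\theta)Q_\ell(z)}\}$. Joint kernel for $\bm\theta_\ell=(\theta_{\ell,\ell-1},\theta_{\ell,\ell})$: $\bm p_\ell(\bm\theta_\ell,A)=\int\min\{\alpha_{\ell-1}(\theta_{\ell,\ell-1},z),\alpha_\ell(\theta_{\ell,\ell},z)\}\mathbf 1_{\{(z,z)\in A\}}Q_\ell(z)\mu_{\mathrm{pr}}(\mathrm{d}z)+\int(\alpha_{\ell-1}(\theta_{\ell,\ell-1},z)-\alpha_\ell(\theta_{\ell,\ell},z))^+\mathbf 1_{\{(z,\theta_{\ell,\ell})\in A\}}Q_\ell(z)\mu_{\mathrm{pr}}(\mathrm{d}z)+\int(\alpha_\ell(\theta_{\ell,\ell},z)-\alpha_{\ell-1}(\theta_{\ell,\ell-1},z))^+\mathbf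 1_{\{(\theta_{\ell,\ell-1},z)\in A\}}Q_\ell(z)\mu_{\mathrm{pr}}(\mathrm{d}z)+\mathbf 1_{\{\bm\theta_\ell\in A\}}(1-\int\max\{\alpha_{\ell-1}(\theta_{\ell,\ell-1},z),\alpha_\ell(\theta_{\ell,\ell},z)\}Q_\ell(z)\mu_{\mathrm{pr}}(\mathrm{d}z))$, operator $(\bm P_\ell f)(\bm\theta)=\int f\,\mathrm{d}\bm p_\ell(\bm\theta,\cdot)$. A set $S$ is small for a kernel $p$ if there exist $m\in\mathbb{N}$ and a non-trivial positive measure $\nu$ with $p^m(x,A)\ge\nu(A)$ for all $x\in S$ and measurable $A$. Assumption 1: (1.1) $Q_\ell$ continuous and positive; (1.2) each $\pi^y_j$ continuous and positive; (1.3) for $j=\ell-1,\ell$, all $c_r>0$, $\{\theta: Q_\ell(\theta)/\pi^y_j(\theta)\le c_r\}$ compact; (1.4) $\exists c\in(0,1)$ independent of $\ell$ with $\operatorname{ess\,inf}_z Q_\ell(z)/\pi^y_j(z)\ge c$; (1.5) $\exists r>1,C_r$ independent of $\ell$ with $\int Q_\ell^r\mathrm{d}\mu_{\mathrm{pr}}\le C_r$. *)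

theory Defs
  imports "HOL-Probability.Probability"
begin

text \<open>Independence-sampler acceptance probability for target density pi
  (w.r.t. the prior) and proposal density Q (w.r.t. the prior).\<close>
definition accept :: "('a \<Rightarrow> real) \<Rightarrow> ('a \<Rightarrow> real) \<Rightarrow> 'a \<Rightarrow> 'a \<Rightarrow> real" where
  "accept p Q \<theta> z = min 1 ((p z * Q \<theta>) / (p \<theta> * Q z))"

text \<open>The joint (coupled) kernel p_l evaluated on a set A; pi0 = pi_(l-1), pi1 = pi_l.\<close>
definition joint_kernel_fun ::
  "'a measure \<Rightarrow> ('a \<Rightarrow> real) \<Rightarrow> ('a \<Rightarrow> real) \<Rightarrow> ('a \<Rightarrow> real)
     \<Rightarrow> 'a \<times> 'a \<Rightarrow> ('a \<times> 'a) set \<Rightarrow> ennreal" where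
  "joint_kernel_fun \<mu> Q pi0 pi1 t A =
     (\<integral>\<^sup>+ z. ennreal (min (accept pi0 Q (fst t) z) (accept pi1 Q (snd t) z) * Q z)
              * indicator A (z, z) \<partial>\<mu>)
   + (\<integral>\<^sup>+ z. ennreal (max 0 (accept pi0 Q (fst t) z - accept pi1 Q (snd t) z) * Q z)
              * indicator A (z, snd t) \<partial>\<mu>)
   + (\<integral>\<^sup>+ z. ennreal (max 0 (accept pi1 Q (snd t) z - accept pi0 Q (fst t) z) * Q z)
              * indicator A (fst t, z) \<partial>\<mu>)
   + indicator A t * ennreal (1 - (\<integral> z. max (accept pi0 Q (fst t) z) (accept pi1 Q (snd t) z) * Q z \<partial>\<mu>))"

definition joint_kernel ::
  "'a::topological_space measure \<Rightarrow> ('a \<Rightarrow> real) \<Rightarrow> ('a \<Rightarrow> real) \<Rightarrow> ('a \<Rightarrow> real)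
     \<Rightarrow> 'a \<times> 'a \<Rightarrow> ('a \<times> 'a) measure" where
  "joint_kernel \<mu> Q pi0 pi1 t =
     measure_of UNIV (sets (borel :: ('a \<times> 'a) measure)) (joint_kernel_fun \<mu> Q pi0 pi1 t)"

fun kernel_pow :: "('b \<Rightarrow> 'b measure) \<Rightarrow> nat \<Rightarrow> 'b \<Rightarrow> 'b set \<Rightarrow> ennreal" where
  "kernel_pow K 0 x A = indicator A x"
| "kernel_pow K (Suc m) x A = (\<integral>\<^sup>+ y. kernel_pow K m y A \<partial>(K x))"

definition small_set :: "('b::topological_space \<Rightarrow> 'b measure) \<Rightarrow> 'b set \<Rightarrow> bool" where
  "small_set K S \<longleftrightarrow> (\<exists>m::nat. \<exists>\<nu>. m \<ge> 1 \<and> sets \<nu> = sets borel \<and> emeasure \<nu> (space \<nu>) > 0 \<and>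
       (\<forall>x\<in>S. \<forall>A\<in>sets borel. kernel_pow K m x A \<ge> emeasure \<nu> A))"

end

theory Submission imports Defs begin

text \<open>Under Assumption 1 the coupled kernel admits a Doeblin minorization on the whole of
  \<open>X\<^sup>2\<close>. Continuity, positivity and compactness of the sublevel sets of \<open>Q/\<pi>\<^sub>j\<close> give
  \<open>Q \<ge> c' \<pi>\<^sub>j\<close> everywhere for some \<open>c' > 0\<close>, hence
  \<open>\<alpha>\<^sub>j(\<theta>, z) Q(z) \<ge> c' \<pi>\<^sub>j(z)\<close> for every current state \<open>\<theta>\<close>. The first term of the
  kernel, which moves both chains to a common proposal \<open>z\<close>, is therefore bounded below by the
  image of \<open>c' min(\<pi>\<^sub>0, \<pi>\<^sub>1) \<mu>\<^sub>p\<^sub>r\<close> under the diagonal map, uniformly in the state, so the whole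
  space is small. Since the kernel has bounded total mass, the drift condition then holds with
  \<open>V = 1\<close>, \<open>S = X\<^sup>2\<close> and \<open>\<lambda> = 1/2\<close>.\<close>

lemma countably_additive_add:
  assumes "countably_additive M f" "countably_additive M g"
  shows "countably_additive M (\<lambda>A. f A + g A :: ennreal)"
  using assms unfolding countably_additive_def by (simp add: suminf_add[symmetric])

lemma countably_additive_nn_integral_indicator:
  fixes g :: "'b \<Rightarrow> ennreal" and h :: "'b \<Rightarrow> 'c::topological_space"
  assumes g: "g \<in> borel_measurable M" and h: "h \<in> M \<rightarrow>\<^sub>M borel"
  shows "countably_additive (sets borel) (\<lambda>A. \<integral>\<^sup>+ z. g z * indicator A (h z) \<partial>M)"
proof (rule countably_additiveI)
  fix A :: "nat \<Rightarrow> 'c set" assume A: "range A \<subseteq> sets borel" "disjoint_family A"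
  have "\<And>i. (\<lambda>z. g z * indicator (A i) (h z)) \<in> borel_measurable M"
    using A(1) g h by (auto intro!: measurable_compose[OF h borel_measurable_indicator])
  then have "(\<Sum>i. \<integral>\<^sup>+ z. g z * indicator (A i) (h z) \<partial>M)
      = \<integral>\<^sup>+ z. (\<Sum>i. g z * indicator (A i) (h z)) \<partial>M"
    by (rule nn_integral_suminf[symmetric])
  also have "\<dots> = \<integral>\<^sup>+ z. g z * indicator (\<Union>i. A i) (h z) \<partial>M"
    using suminf_indicator[OF A(2)] by simp
  finally show "(\<Sum>i. \<integral>\<^sup>+ z. g z * indicator (A i) (h z) \<partial>M)
      = \<integral>\<^sup>+ z. g z * indicator (\<Union>i. A i) (h z) \<partial>M" .
qed

lemma countably_additive_indicator_mult:
  "countably_additive (sets borel) (\<lambda>A. indicator A (t::'c::topological_space) * (c::ennreal))"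
proof (rule countably_additiveI)
  fix A :: "nat \<Rightarrow> 'c set" assume "disjoint_family A"
  then show "(\<Sum>i. indicator (A i) t * c) = indicator (\<Union>i. A i) t * c"
    using suminf_indicator[of A t] by simp
qed

lemma emeasure_distr_density:
  assumes h: "h \<in> borel_measurable M" and g: "g \<in> M \<rightarrow>\<^sub>M N" and A: "A \<in> sets N"
  shows "emeasure (distr (density M h) N g) A = \<integral>\<^sup>+ z. h z * indicator A (g z) \<partial>M"
proof -
  have "emeasure (distr (density M h) N g) A = emeasure (density M h) (g -` A \<inter> space M)"
    using g A by (subst emeasure_distr) auto
  also have "\<dots> = \<integral>\<^sup>+ z. h z * indicator (g -` A \<inter> space M) z \<partial>M"
    using measurable_sets[OF g A] by (rule emeasure_density[OF h])
  also have "\<dots> = \<integral>\<^sup>+ z. h z * indicator A (g z) \<partial>M"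
    by (rule nn_integral_cong) (simp add: indicator_def)
  finally show ?thesis .
qed

lemma borel_measurable_continuous_on_UNIV:
  fixes f :: "'a::topological_space \<Rightarrow> 'b::topological_space"
  assumes "sets M = sets borel" "continuous_on UNIV f"
  shows "f \<in> M \<rightarrow>\<^sub>M borel"
  by (subst measurable_cong_sets[OF assms(1) refl]) (rule borel_measurable_continuous_onI[OF assms(2)])

lemma ratio_lower_bound:
  fixes Q p :: "'a::topological_space \<Rightarrow> real"
  assumes Q: "continuous_on UNIV Q" and p: "continuous_on UNIV p" "\<And>x. p x > 0"
    and Q_pos: "\<And>x. Q x > 0"
    and compact_sublevel: "compact {\<theta>. Q \<theta> / p \<theta> \<le> 1}"
  shows "\<exists>c>0. \<forall>x. c \<le> Q x / p x"
proof (cases "{\<theta>. Q \<theta> / p \<theta> \<le> 1} = {}")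
  case True
  then have "\<forall>x. 1 \<le> Q x / p x"
    by (metis (mono_tags) empty_iff linorder_le_cases mem_Collect_eq)
  then show ?thesis by (intro exI[of _ 1]) auto
next
  case False
  have "continuous_on {\<theta>. Q \<theta> / p \<theta> \<le> 1} (\<lambda>x. Q x / p x)"
    using p(2) by (intro continuous_on_divide continuous_on_subset[OF Q] continuous_on_subset[OF p(1)])
      (auto simp: less_imp_neq[symmetric])
  then obtain x0 where "Q x0 / p x0 \<le> 1"
    and x0_min: "\<And>y. Q y / p y \<le> 1 \<Longrightarrow> Q x0 / p x0 \<le> Q y / p y"
    using continuous_attains_inf[OF compact_sublevel False] by auto
  then have "\<forall>x. Q x0 / p x0 \<le> Q x / p x"
    by (metis linorder_le_cases order_trans)
  moreover have "Q x0 / p x0 > 0"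
    using Q_pos p(2) by simp
  ultimately show ?thesis by blast
qed

lemma accept_nonneg:
  fixes p Q :: "'b \<Rightarrow> real"
  assumes "\<And>x. Q x > 0" "\<And>x. p x > 0"
  shows "0 \<le> accept p Q \<theta> z"
  using assms[of z] assms[of \<theta>] unfolding accept_def by (auto intro: less_imp_le)

lemma accept_le_one: "accept p Q \<theta> z \<le> 1"
  unfolding accept_def by simp

lemma accept_mult_ge:
  fixes p Q :: "'b \<Rightarrow> real"
  assumes Q: "\<And>x. Q x > 0" and p: "\<And>x. p x > 0" and c: "\<And>x. c \<le> Q x / p x"
  shows "c * p z \<le> accept p Q \<theta> z * Q z"
proof (cases "1 \<le> (p z * Q \<theta>) / (p \<theta> * Q z)")
  case True
  have "c * p z \<le> Q z"
    using c[of z] p[of z] by (simp add: field_simps)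
  with True show ?thesis
    unfolding accept_def by simp
next
  case False
  then have "accept p Q \<theta> z * Q z = p z * (Q \<theta> / p \<theta>)"
    unfolding accept_def using Q[of z] by (simp add: field_simps)
  also have "\<dots> \<ge> p z * c"
    using c[of \<theta>] p[of z] by (intro mult_left_mono) auto
  finally show ?thesis by (simp add: mult.commute)
qed

lemma sets_joint_kernel: "sets (joint_kernel \<mu> Q pi0 pi1 t) = sets borel"
  unfolding joint_kernel_def
  by (subst sets_measure_of) (auto simp: sets.sigma_sets_eq[of borel, simplified])

lemma space_joint_kernel: "space (joint_kernel \<mu> Q pi0 pi1 t) = UNIV"
  unfolding joint_kernel_def by (simp add: space_measure_of_conv)

lemma emeasure_joint_kernel:
  fixes \<mu> :: "'a::topological_space measure"
  assumes \<mu>: "sets \<mu> = sets borel"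
    and cont: "continuous_on UNIV Q" "continuous_on UNIV pi0" "continuous_on UNIV pi1"
    and A: "A \<in> sets borel"
  shows "emeasure (joint_kernel \<mu> Q pi0 pi1 t) A = joint_kernel_fun \<mu> Q pi0 pi1 t A"
proof -
  note meas = borel_measurable_continuous_on_UNIV[OF \<mu>]
  note [measurable] = meas[OF cont(1)] meas[OF cont(2)] meas[OF cont(3)]
  have diag: "(\<lambda>z. (z, z)) \<in> \<mu> \<rightarrow>\<^sub>M borel"
    and left: "(\<lambda>z. (z, snd t)) \<in> \<mu> \<rightarrow>\<^sub>M borel"
    and right: "(\<lambda>z. (fst t, z)) \<in> \<mu> \<rightarrow>\<^sub>M borel"
    by (intro meas continuous_intros)+
  have "sigma_algebra UNIV (sets (borel :: ('a \<times> 'a) measure))"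
    using sets.sigma_algebra_axioms[of "borel :: ('a \<times> 'a) measure"] by simp
  moreover have "positive (sets borel) (joint_kernel_fun \<mu> Q pi0 pi1 t)"
    unfolding positive_def joint_kernel_fun_def by simp
  moreover have "countably_additive (sets borel) (joint_kernel_fun \<mu> Q pi0 pi1 t)"
    unfolding joint_kernel_fun_def
    by (intro countably_additive_add countably_additive_nn_integral_indicator[OF _ diag]
        countably_additive_nn_integral_indicator[OF _ left]
        countably_additive_nn_integral_indicator[OF _ right]
        countably_additive_indicator_mult) (unfold accept_def; measurable)+
  ultimately show ?thesis
    unfolding joint_kernel_def using A by (rule emeasure_measure_of_sigma)
qed

lemma small_set_UNIV_if_minorized:
  fixes K :: "'b::topological_space \<Rightarrow> 'b measure"
  assumes sets_K: "\<And>x. sets (K x) = sets borel"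
    and \<nu>: "sets \<nu> = sets borel" "emeasure \<nu> (space \<nu>) > 0"
    and minor: "\<And>x A. A \<in> sets borel \<Longrightarrow> emeasure \<nu> A \<le> emeasure (K x) A"
  shows "small_set K UNIV"
  unfolding small_set_def
  using \<nu> minor by (intro exI[of _ 1] exI[of _ \<nu>]) (simp add: sets_K)

lemma small_set_UNIV_joint_kernel:
  fixes \<mu> :: "'a::topological_space measure"
  assumes \<mu>: "prob_space \<mu>" "sets \<mu> = sets borel"
    and Q: "continuous_on UNIV Q" "\<And>x. Q x > 0"
    and pi0: "continuous_on UNIV pi0" "\<And>x. pi0 x > 0"
    and pi1: "continuous_on UNIV pi1" "\<And>x. pi1 x > 0"
    and c0: "c0 > 0" "\<And>x. c0 \<le> Q x / pi0 x"
    and c1: "c1 > 0" "\<And>x. c1 \<le> Q x / pi1 x"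
  shows "small_set (joint_kernel \<mu> Q pi0 pi1) UNIV"
proof -
  note meas = borel_measurable_continuous_on_UNIV[OF \<mu>(2)]
  note [measurable] = meas[OF pi0(1)] meas[OF pi1(1)]
  have diag: "(\<lambda>z. (z, z)) \<in> \<mu> \<rightarrow>\<^sub>M (borel :: ('a \<times> 'a) measure)"
    by (intro meas continuous_intros)
  define c where "c = min c0 c1"
  have c: "c > 0"
    using c0(1) c1(1) by (simp add: c_def)
  define h where "h z = ennreal (c * min (pi0 z) (pi1 z))" for z
  have h: "h \<in> borel_measurable \<mu>"
    unfolding h_def by measurable
  define \<nu> where "\<nu> = distr (density \<mu> h) borel (\<lambda>z. (z, z))"
  have \<nu>_eq: "emeasure \<nu> A = \<integral>\<^sup>+ z. h z * indicator A (z, z) \<partial>\<mu>" if "A \<in> sets borel" for A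
    unfolding \<nu>_def using h diag that by (rule emeasure_distr_density)
  show ?thesis
  proof (rule small_set_UNIV_if_minorized[OF sets_joint_kernel])
    show "sets \<nu> = sets borel"
      by (simp add: \<nu>_def)
    have "\<forall>z. h z \<noteq> 0"
      unfolding h_def using c pi0(2) pi1(2) by (simp add: ennreal_eq_0_iff not_le)
    then have "(\<integral>\<^sup>+ z. h z \<partial>\<mu>) \<noteq> 0"
      using nn_integral_0_iff_AE[OF h] prob_space.AE_False[OF \<mu>(1)] by simp
    then show "emeasure \<nu> (space \<nu>) > 0"
      using \<nu>_eq[of UNIV] by (simp add: \<nu>_def zero_less_iff_neq_zero)
  next
    fix x :: "'a \<times> 'a" and A :: "('a \<times> 'a) set" assume A: "A \<in> sets borel"
    let ?a0 = "accept pi0 Q (fst x)" and ?a1 = "accept pi1 Q (snd x)"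
    have "c * min (pi0 z) (pi1 z) \<le> min (?a0 z) (?a1 z) * Q z" for z
    proof -
      have "c * pi0 z \<le> ?a0 z * Q z"
        using c0 by (intro accept_mult_ge[OF Q(2) pi0(2)] order_trans[OF _ c0(2)]) (simp add: c_def)
      moreover have "c * pi1 z \<le> ?a1 z * Q z"
        using c1 by (intro accept_mult_ge[OF Q(2) pi1(2)] order_trans[OF _ c1(2)]) (simp add: c_def)
      ultimately show ?thesis
        using c Q(2)[of z] by (simp add: min_mult_distrib_right min_mult_distrib_left min_le_iff_disj)
    qed
    then have "emeasure \<nu> A \<le> \<integral>\<^sup>+ z. ennreal (min (?a0 z) (?a1 z) * Q z) * indicator A (z, z) \<partial>\<mu>"
      unfolding \<nu>_eq[OF A] h_def
      by (intro nn_integral_mono) (auto simp: indicator_def intro: ennreal_leI)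
    also have "\<dots> \<le> joint_kernel_fun \<mu> Q pi0 pi1 x A"
      unfolding joint_kernel_fun_def by (intro add_increasing2) auto
    also have "\<dots> = emeasure (joint_kernel \<mu> Q pi0 pi1 x) A"
      using emeasure_joint_kernel[OF \<mu>(2) Q(1) pi0(1) pi1(1) A] by simp
    finally show "emeasure \<nu> A \<le> emeasure (joint_kernel \<mu> Q pi0 pi1 x) A" .
  qed
qed

lemma nn_integral_mult_density_le_one:
  assumes Q: "\<And>z. Q z \<ge> 0" "(\<integral>\<^sup>+ z. ennreal (Q z) \<partial>M) = 1"
    and f: "\<And>z. 0 \<le> f z" "\<And>z. f z \<le> 1"
  shows "(\<integral>\<^sup>+ z. ennreal (f z * Q z) * indicator B (g z) \<partial>M) \<le> 1"
proof -
  have "f z * Q z \<le> Q z" for z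
    using f[of z] Q(1)[of z] by (simp add: mult_left_le_one_le)
  then have "(\<integral>\<^sup>+ z. ennreal (f z * Q z) * indicator B (g z) \<partial>M) \<le> \<integral>\<^sup>+ z. ennreal (Q z) \<partial>M"
    by (intro nn_integral_mono) (auto simp: indicator_def intro: ennreal_leI)
  with Q(2) show ?thesis by simp
qed

text \<open>The four terms of the kernel in fact sum to total mass \<open>1\<close>, but a crude bound by
  \<open>1\<close> for each term suffices for the drift condition.\<close>

lemma emeasure_joint_kernel_UNIV_le:
  fixes \<mu> :: "'a::topological_space measure"
  assumes \<mu>: "sets \<mu> = sets borel"
    and Q: "continuous_on UNIV Q" "\<And>x. Q x > 0" "(\<integral>\<^sup>+ z. ennreal (Q z) \<partial>\<mu>) = 1"
    and pi0: "continuous_on UNIV pi0" "\<And>x. pi0 x > 0"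
    and pi1: "continuous_on UNIV pi1" "\<And>x. pi1 x > 0"
  shows "emeasure (joint_kernel \<mu> Q pi0 pi1 t) UNIV \<le> 4"
proof -
  let ?a0 = "accept pi0 Q (fst t)" and ?a1 = "accept pi1 Q (snd t)"
  have a0: "0 \<le> ?a0 z" "?a0 z \<le> 1" and a1: "0 \<le> ?a1 z" "?a1 z \<le> 1" for z
    using accept_nonneg[of Q pi0] accept_nonneg[of Q pi1] Q(2) pi0(2) pi1(2) accept_le_one
    by auto
  note term_le_one = nn_integral_mult_density_le_one[OF less_imp_le[OF Q(2)] Q(3)]
  have "emeasure (joint_kernel \<mu> Q pi0 pi1 t) UNIV = joint_kernel_fun \<mu> Q pi0 pi1 t UNIV"
    by (rule emeasure_joint_kernel[OF \<mu> Q(1) pi0(1) pi1(1)]) simp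
  also have "\<dots> \<le> 1 + 1 + 1 + 1"
    unfolding joint_kernel_fun_def
  proof (intro add_mono term_le_one)
    have "0 \<le> (\<integral> z. max (?a0 z) (?a1 z) * Q z \<partial>\<mu>)"
      using a0 Q(2) by (intro integral_nonneg_AE AE_I2 mult_nonneg_nonneg)
        (auto simp: le_max_iff_disj less_imp_le)
    then show "indicator UNIV t * ennreal (1 - (\<integral> z. max (?a0 z) (?a1 z) * Q z \<partial>\<mu>)) \<le> 1"
      by (simp add: ennreal_leI)
  qed (smt (verit) a0 a1)+
  finally show ?thesis by simp
qed

lemma drift_condition_if_small_UNIV:
  fixes K :: "'b::topological_space \<Rightarrow> 'b measure"
  assumes small: "small_set K UNIV" and mass: "\<And>t. emeasure (K t) (space (K t)) \<le> ennreal M"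
  shows "\<exists>V S (lam::real) (\<kappa>::real).
           V \<in> borel_measurable borel \<and> (\<forall>t. V t \<ge> 1) \<and>
           S \<in> sets (borel :: 'b measure) \<and> small_set K S \<and> 0 < lam \<and> lam < 1 \<and>
           (\<forall>t. (\<integral>\<^sup>+ y. ennreal (V y) \<partial>(K t)) \<le> ennreal (lam * V t + \<kappa> * indicator S t))"
proof -
  have "(\<integral>\<^sup>+ y. 1 \<partial>K t) \<le> ennreal (1/2 + M)" for t
    using mass[of t] order_trans[OF _ ennreal_leI[of M "1/2 + M"]] by simp
  with small show ?thesis
    by (intro exI[of _ "\<lambda>_. 1"] exI[of _ UNIV] exI[of _ "1/2"] exI[of _ M]) auto
qed

theorem mainTheorem6:
  fixes \<mu> :: "'a::{banach, second_countable_topology} measure"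
    and Q pi0 pi1 :: "'a \<Rightarrow> real"
    and c r Cr :: real
  assumes prior: "prob_space \<mu>" "sets \<mu> = sets borel"
    and Q_dens: "integrable \<mu> Q" "(\<integral> z. Q z \<partial>\<mu>) = 1"
    and pi0_dens: "integrable \<mu> pi0" "(\<integral> z. pi0 z \<partial>\<mu>) = 1"
    and pi1_dens: "integrable \<mu> pi1" "(\<integral> z. pi1 z \<partial>\<mu>) = 1"
    and A1_1: "continuous_on UNIV Q" "\<And>x. Q x > 0"
    and A1_2: "continuous_on UNIV pi0" "\<And>x. pi0 x > 0"
              "continuous_on UNIV pi1" "\<And>x. pi1 x > 0"
    and A1_3: "\<And>cr. cr > 0 \<Longrightarrow> compact {\<theta>. Q \<theta> / pi0 \<theta> \<le> cr}"
              "\<And>cr. cr > 0 \<Longrightarrow> compact {\<theta>. Q \<theta> / pi1 \<theta> \<le> cr}"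
    and A1_4: "0 < c" "c < 1"
              "AE z in \<mu>. Q z / pi0 z \<ge> c" "AE z in \<mu>. Q z / pi1 z \<ge> c"
    and A1_5: "r > 1" "integrable \<mu> (\<lambda>z. Q z powr r)" "(\<integral> z. Q z powr r \<partial>\<mu>) \<le> Cr"
  shows "\<exists>V S (lam::real) (\<kappa>::real).
           V \<in> borel_measurable borel \<and> (\<forall>t. V t \<ge> 1) \<and>
           S \<in> sets (borel :: ('a \<times> 'a) measure) \<and>
           small_set (joint_kernel \<mu> Q pi0 pi1) S \<and>
           0 < lam \<and> lam < 1 \<and>
           (\<forall>t. (\<integral>\<^sup>+ y. ennreal (V y) \<partial>(joint_kernel \<mu> Q pi0 pi1 t))
                  \<le> ennreal (lam * V t + \<kappa> * indicator S t))"
proof (rule drift_condition_if_small_UNIV)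
  obtain c0 where "c0 > 0" "\<And>x. c0 \<le> Q x / pi0 x"
    using ratio_lower_bound[OF A1_1(1) A1_2(1,2) A1_1(2) A1_3(1)] by auto
  moreover obtain c1 where "c1 > 0" "\<And>x. c1 \<le> Q x / pi1 x"
    using ratio_lower_bound[OF A1_1(1) A1_2(3,4) A1_1(2) A1_3(2)] by auto
  ultimately show "small_set (joint_kernel \<mu> Q pi0 pi1) UNIV"
    by (rule small_set_UNIV_joint_kernel[OF prior A1_1 A1_2])
  have "(\<integral>\<^sup>+ z. ennreal (Q z) \<partial>\<mu>) = 1"
    using nn_integral_eq_integral[OF Q_dens(1)] A1_1(2) Q_dens(2) by (simp add: less_imp_le)
  then show "emeasure (joint_kernel \<mu> Q pi0 pi1 t) (space (joint_kernel \<mu> Q pi0 pi1 t)) \<le> ennreal 4"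
    for t unfolding space_joint_kernel
    using emeasure_joint_kernel_UNIV_le[OF prior(2) A1_1 _ A1_2] by simp
qed

end
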